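(* Let $k\ge 2$ and $n$ be integers with $2k-1 \le n$. Then $$N(CM,k,n)\le\begin{cases} n-k+1 & \text{if } k \text{ is even},\\ (n-k+1)\cdot\bigl(1+\mathsf{d}(k-1,n)\bigr) & \text{if } k \text{ is odd.}\end{cases}$$
   Context: We are given $n$ balls, the set $[n]=\{1,\dots,n\}$, each colored with one of two colors by an unknown coloring. A ball $i$ is a majority ball if more than $n/2$ balls have the same color as $i$. A query is a subset $Q\subseteq[n]$ with $|Q|=k$. In the Counting Model (CM), the answer to a query $Q$ is the number $i\le k/2$ such that $Q$ contains exactly $i$ balls of one of the colors (and $k-i$ of the other); no indication of which color is given. A non-adaptive strategy is a family of queries $Q_1,\dots,Q_q$ fixed in advance. It succeeds if for every coloring, the answers determine the outcome: either every coloring consistent with the answers has no majority ball, or there is a ball that is a majority ball in every coloring consistent with the answers. $N(CM,k,n)$ is the minimum number of queries in a successful non-adaptive strategy. A 2-coloring of a $k$-element set is balanced if the sizes of the two color classes differ by at most one. A hypergraph has Property C if its vertices can be 2-colored so that every edge is balanced. For $k\ge 2$, $\mathsf{d}(k,n)$ denotes the minimum number of edges of a $k$-uniform hypergraph on $n$ vertices that does not have Property C. *)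

theory Defs
  imports Main
begin

(* Balls are [n] = {1..n}; a coloring is c :: nat => bool (only values on {1..n} matter). *)

definition cm_answer :: "(nat \<Rightarrow> bool) \<Rightarrow> nat set \<Rightarrow> nat" where
  "cm_answer c Q = min (card {j\<in>Q. c j}) (card {j\<in>Q. \<not> c j})"

definition majority_ball :: "nat \<Rightarrow> (nat \<Rightarrow> bool) \<Rightarrow> nat \<Rightarrow> bool" where
  "majority_ball n c i \<longleftrightarrow> i \<in> {1..n} \<and> 2 * card {j\<in>{1..n}. c j = c i} > n"

definition cm_consistent :: "nat set list \<Rightarrow> (nat \<Rightarrow> bool) \<Rightarrow> (nat \<Rightarrow> bool) \<Rightarrow> bool" where
  "cm_consistent Qs c c' \<longleftrightarrow> (\<forall>Q\<in>set Qs. cm_answer c' Q = cm_answer c Q)"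

definition cm_succeeds :: "nat \<Rightarrow> nat set list \<Rightarrow> bool" where
  "cm_succeeds n Qs \<longleftrightarrow>
     (\<forall>c. (\<forall>c'. cm_consistent Qs c c' \<longrightarrow> \<not> (\<exists>i. majority_ball n c' i))
        \<or> (\<exists>i\<in>{1..n}. \<forall>c'. cm_consistent Qs c c' \<longrightarrow> majority_ball n c' i))"

definition N_CM :: "nat \<Rightarrow> nat \<Rightarrow> nat" where
  "N_CM k n = (LEAST q. \<exists>Qs. length Qs = q \<and> (\<forall>Q\<in>set Qs. Q \<subseteq> {1..n} \<and> card Q = k)
                              \<and> cm_succeeds n Qs)"

definition balanced_on :: "(nat \<Rightarrow> bool) \<Rightarrow> nat set \<Rightarrow> bool" where
  "balanced_on c e \<longleftrightarrow>
     card {j\<in>e. c j} \<le> card {j\<in>e. \<not> c j} + 1 \<and> card {j\<in>e. \<not> c j} \<le> card {j\<in>e. c j} + 1"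

definition property_C :: "nat set set \<Rightarrow> bool" where
  "property_C E \<longleftrightarrow> (\<exists>c. \<forall>e\<in>E. balanced_on c e)"

definition dC :: "nat \<Rightarrow> nat \<Rightarrow> nat" where
  "dC k n = (LEAST m. \<exists>E. E \<subseteq> {e. e \<subseteq> {1..n} \<and> card e = k} \<and> card E = m \<and> \<not> property_C E)"

end

theory Submission
  imports Defs
begin

(* Fix a family F of (k-1)-sets and query A \<union> {y} for every A in F and every ball y outside A,
   which costs n - k + 1 queries per set.  If A holds a balls of one color and b of the other,
   the answer to A \<union> {y} is min (a + [c y]) (b + [\<not> c y]).  When a \<noteq> b these answers
   determine the coloring outside A up to swapping the colors and, unless the outside of A is
   monochromatic, also the count a; either way they decide whether a ball outside A is a majority
   ball.  As 2|A| < n, every majority color has a ball outside A, so the answers decide the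
   majority question.
   For even k the sets have odd size and never split evenly, so one set suffices.  For odd
   k = 2h + 1, an evenly split A answers h to all its queries, so any other answer certifies
   a \<noteq> b for every consistent coloring.  A coloring answering h everywhere has, on each set
   with a \<noteq> b, a color class of exactly h + 1 balls inside that set.  Taking for F the edges
   of a 2h-uniform hypergraph without Property C plus one 2h-set D disjoint from an edge A0,
   that class would have to meet both A0 and D in h balls, impossible for h \<ge> 2.  For k = 3
   the triangle {1,2}, {1,3}, {2,3} does the job: the class of two balls lies in {1,2,3}, so
   ball 4 is a majority ball. *)

section \<open>Color counts\<close>

definition evenly_split :: "(nat \<Rightarrow> bool) \<Rightarrow> nat set \<Rightarrow> bool" where
  "evenly_split c A \<longleftrightarrow> card {j\<in>A. c j} = card {j\<in>A. \<not> c j}"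

lemma card_filter_insert:
  assumes "finite A" "y \<notin> A"
  shows "card {j \<in> insert y A. P j} = card {j\<in>A. P j} + of_bool (P y)"
proof -
  have "{j \<in> insert y A. P j} = (if P y then insert y {j\<in>A. P j} else {j\<in>A. P j})"
    by auto
  then show ?thesis using assms by simp
qed

lemma card_filter_add_card_filter_not:
  assumes "finite A"
  shows "card {j\<in>A. P j} + card {j\<in>A. \<not> P j} = card A"
proof -
  have "A = {j\<in>A. P j} \<union> {j\<in>A. \<not> P j}" by blast
  with assms show ?thesis by (metis (no_types, lifting) card_Un_disjoint disjoint_iff
      finite_Un mem_Collect_eq)
qed

lemma card_filter_diff:
  assumes "A \<subseteq> B" "finite B"
  shows "card {j\<in>B. P j} = card {j\<in>A. P j} + card {j\<in>B - A. P j}"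
proof -
  have "{j\<in>B. P j} = {j\<in>A. P j} \<union> {j\<in>B - A. P j}" using assms(1) by blast
  moreover have "finite {j\<in>A. P j}" using assms by (simp add: finite_subset)
  ultimately show ?thesis using assms(2) by (simp add: card_Un_disjoint disjoint_iff)
qed

lemma cm_answer_insert:
  "finite A \<Longrightarrow> y \<notin> A \<Longrightarrow> cm_answer c (insert y A) =
     min (card {j\<in>A. c j} + of_bool (c y)) (card {j\<in>A. \<not> c j} + of_bool (\<not> c y))"
  unfolding cm_answer_def by (subst (1 2) card_filter_insert) auto

lemma cm_answer_Not: "cm_answer (\<lambda>j. \<not> c j) Q = cm_answer c Q"
  unfolding cm_answer_def by (simp add: min.commute)

lemma majority_ball_Not: "majority_ball n (\<lambda>j. \<not> c j) i = majority_ball n c i"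
  unfolding majority_ball_def by simp

lemma evenly_split_Not: "evenly_split (\<lambda>j. \<not> c j) A = evenly_split c A"
  unfolding evenly_split_def by auto

lemma evenly_split_iff_card:
  "finite A \<Longrightarrow> card A = 2 * q \<Longrightarrow> evenly_split c A \<longleftrightarrow> card {j\<in>A. c j} = q"
  using card_filter_add_card_filter_not[of A c] unfolding evenly_split_def by auto

lemma not_evenly_split_of_odd: "finite A \<Longrightarrow> odd (card A) \<Longrightarrow> \<not> evenly_split c A"
  unfolding evenly_split_def by (metis card_filter_add_card_filter_not even_add)

lemma balanced_on_iff_evenly_split:
  "finite A \<Longrightarrow> even (card A) \<Longrightarrow> balanced_on c A \<longleftrightarrow> evenly_split c A"
  using card_filter_add_card_filter_not[of A c] unfolding evenly_split_def balanced_on_def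
  by presburger

lemma evenly_split_pair: "a \<noteq> b \<Longrightarrow> evenly_split c {a, b} \<longleftrightarrow> c a \<noteq> c b"
  unfolding evenly_split_def by (subst (1 2) card_filter_insert) (auto simp: Collect_conv_if)

lemma min_Suc_ne_min_Suc: "(p::nat) \<noteq> q \<Longrightarrow> min (p + 1) q \<noteq> min p (q + 1)"
  by (simp add: min_def)

lemma eq_of_min_Suc_eq:
  fixes a b a' b' :: nat
  assumes "a + b = a' + b'" "a \<noteq> b" "a' \<noteq> b'"
    and "min (a + 1) b = min (a' + 1) b'" "min a (b + 1) = min a' (b' + 1)"
  shows "a = a'"
  using assms by (simp add: min_def split: if_splits)

section \<open>Extension queries\<close>

definition extension_queries :: "nat \<Rightarrow> nat set list \<Rightarrow> nat set list" where
  "extension_queries n F =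
     concat (map (\<lambda>A. map (\<lambda>y. insert y A) (sorted_list_of_set ({1..n} - A))) F)"

lemma mem_extension_queries:
  "Q \<in> set (extension_queries n F) \<longleftrightarrow> (\<exists>A\<in>set F. \<exists>y\<in>{1..n} - A. Q = insert y A)"
  unfolding extension_queries_def by auto

lemma length_extension_queries:
  assumes "\<forall>A\<in>set F. A \<subseteq> {1..n} \<and> card A = m"
  shows "length (extension_queries n F) = length F * (n - m)"
  using assms
proof (induction F)
  case Nil
  then show ?case by (simp add: extension_queries_def)
next
  case (Cons A F)
  then have "finite A" and "card ({1..n} - A) = n - m"
    by (auto simp: card_Diff_subset finite_subset)
  with Cons show ?case by (simp add: extension_queries_def)
qed

lemma extension_queries_subset_card:
  assumes "\<forall>A\<in>set F. A \<subseteq> {1..n} \<and> card A = m" and "Q \<in> set (extension_queries n F)"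
  shows "Q \<subseteq> {1..n} \<and> card Q = Suc m"
  using assms by (auto simp: mem_extension_queries finite_subset)

lemma N_CM_le_length_extension_queries:
  assumes "\<forall>A\<in>set F. A \<subseteq> {1..n} \<and> card A = m" and "cm_succeeds n (extension_queries n F)"
  shows "N_CM (Suc m) n \<le> length F * (n - m)"
  unfolding N_CM_def
proof (rule Least_le, intro exI conjI)
  show "length (extension_queries n F) = length F * (n - m)"
    by (rule length_extension_queries[OF assms(1)])
  show "\<forall>Q\<in>set (extension_queries n F). Q \<subseteq> {1..n} \<and> card Q = Suc m"
    using extension_queries_subset_card[OF assms(1)] by blast
qed (rule assms(2))

lemma extension_answers_determine_coloring:
  assumes fA: "finite A" and disj: "A \<inter> B = {}"
    and split: "\<not> evenly_split c A" "\<not> evenly_split c' A"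
    and ans: "\<forall>y\<in>B. cm_answer c (insert y A) = cm_answer c' (insert y A)"
    and x: "x \<in> B" "c x" "c' x"
  shows "(\<forall>y\<in>B. c y = c' y) \<and> (card {j\<in>A. c j} = card {j\<in>A. c' j} \<or> (\<forall>y\<in>B. c y))"
proof -
  define a b a' b' where "a = card {j\<in>A. c j}" and "b = card {j\<in>A. \<not> c j}"
    and "a' = card {j\<in>A. c' j}" and "b' = card {j\<in>A. \<not> c' j}"
  have sums: "a + b = a' + b'"
    using card_filter_add_card_filter_not[OF fA] unfolding a_def b_def a'_def b'_def by metis
  have uneven: "a \<noteq> b" "a' \<noteq> b'"
    using split unfolding evenly_split_def a_def b_def a'_def b'_def by auto
  have eq: "min (a + of_bool (c y)) (b + of_bool (\<not> c y))
          = min (a' + of_bool (c' y)) (b' + of_bool (\<not> c' y))" if "y \<in> B" for y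
  proof -
    have "y \<notin> A" using that disj by blast
    then show ?thesis
      using ans that cm_answer_insert[OF fA, of y c] cm_answer_insert[OF fA, of y c']
      unfolding a_def b_def a'_def b'_def by simp
  qed
  have at_x: "min (a + 1) b = min (a' + 1) b'"
    using eq[OF x(1)] x by simp
  have agree: "c y = c' y" if "y \<in> B" for y
    using eq[OF that] at_x min_Suc_ne_min_Suc[OF uneven(1)] min_Suc_ne_min_Suc[OF uneven(2)]
    by (cases "c y"; cases "c' y") auto
  have "a = a'" if "y \<in> B" "\<not> c y" for y
    using eq[OF that(1)] agree[OF that(1)] that(2) by (intro eq_of_min_Suc_eq[OF sums uneven at_x]) simp
  then show ?thesis
    using agree unfolding a_def a'_def by blast
qed

lemma majority_ball_transfer_normalized:
  assumes A: "A \<subseteq> {1..n}" "2 * card A < n"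
    and split: "\<not> evenly_split c A" "\<not> evenly_split c' A"
    and ans: "\<forall>y\<in>{1..n} - A. cm_answer c (insert y A) = cm_answer c' (insert y A)"
    and x: "x \<in> {1..n} - A" "c x" "c' x"
    and maj: "majority_ball n c x"
  shows "majority_ball n c' x"
proof -
  have fA: "finite A" using A(1) finite_subset by blast
  have outside: "(\<forall>y\<in>{1..n} - A. c y = c' y)
      \<and> (card {j\<in>A. c j} = card {j\<in>A. c' j} \<or> (\<forall>y\<in>{1..n} - A. c y))"
    by (rule extension_answers_determine_coloring[OF fA Diff_disjoint split ans x])
  have count: "card {j\<in>{1..n}. d j} = card {j\<in>A. d j} + card {j\<in>{1..n} - A. d j}" for d
    by (rule card_filter_diff[OF A(1)]) simp
  have "n < 2 * card {j\<in>{1..n}. c' j}"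
  proof (cases "card {j\<in>A. c j} = card {j\<in>A. c' j}")
    case True
    have "{j\<in>{1..n} - A. c' j} = {j\<in>{1..n} - A. c j}" using outside by auto
    then show ?thesis using maj x(2) True count[of c] count[of c']
      unfolding majority_ball_def by simp
  next
    case False
    then have "{j\<in>{1..n} - A. c' j} = {1..n} - A" using outside by auto
    moreover have "card ({1..n} - A) = n - card A" using A fA by (simp add: card_Diff_subset)
    ultimately show ?thesis using A(2) count[of c'] by simp
  qed
  then show ?thesis using x unfolding majority_ball_def by simp
qed

lemma majority_ball_transfer:
  assumes A: "A \<subseteq> {1..n}" "2 * card A < n"
    and split: "\<not> evenly_split c A" "\<not> evenly_split c' A"
    and ans: "\<forall>y\<in>{1..n} - A. cm_answer c (insert y A) = cm_answer c' (insert y A)"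
    and x: "x \<in> {1..n} - A"
    and maj: "majority_ball n c x"
  shows "majority_ball n c' x"
proof -
  define d where "d = (if c x then c else (\<lambda>j. \<not> c j))"
  define d' where "d' = (if c' x then c' else (\<lambda>j. \<not> c' j))"
  have "majority_ball n d' x"
  proof (rule majority_ball_transfer_normalized[OF A _ _ _ x])
    show "\<not> evenly_split d A" "\<not> evenly_split d' A"
      using split evenly_split_Not unfolding d_def d'_def by auto
    show "\<forall>y\<in>{1..n} - A. cm_answer d (insert y A) = cm_answer d' (insert y A)"
      using ans cm_answer_Not unfolding d_def d'_def by auto
    show "d x" "d' x" unfolding d_def d'_def by auto
    show "majority_ball n d x" using maj majority_ball_Not unfolding d_def by auto
  qed
  then show ?thesis using majority_ball_Not unfolding d'_def by (auto split: if_splits)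
qed

lemma majority_ball_outside:
  assumes A: "A \<subseteq> {1..n}" "2 * card A < n" and maj: "majority_ball n c i"
  obtains x where "x \<in> {1..n} - A" "majority_ball n c x"
proof -
  define C where "C = {j\<in>{1..n}. c j = c i}"
  have "card A < card C" using maj A(2) unfolding majority_ball_def C_def by simp
  then have "\<not> C \<subseteq> A" using A(1) card_mono[of A C] finite_subset by fastforce
  then obtain x where "x \<in> C" "x \<notin> A" by blast
  then show thesis using maj that unfolding majority_ball_def C_def by auto
qed

lemma cm_consistent_refl: "cm_consistent Qs c c"
  unfolding cm_consistent_def by simp

lemma cm_consistent_extension_queries:
  assumes "cm_consistent (extension_queries n F) c c'" "A \<in> set F" "y \<in> {1..n} - A"
  shows "cm_answer c' (insert y A) = cm_answer c (insert y A)"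
  using assms mem_extension_queries unfolding cm_consistent_def by blast

lemma cm_succeeds_extension_queriesI:
  assumes F: "\<forall>A\<in>set F. A \<subseteq> {1..n} \<and> 2 * card A < n"
    and decided: "\<And>c. (\<exists>A\<in>set F. \<forall>c'. cm_consistent (extension_queries n F) c c'
                                            \<longrightarrow> \<not> evenly_split c' A)
               \<or> (\<exists>i\<in>{1..n}. \<forall>c'. cm_consistent (extension_queries n F) c c'
                                            \<longrightarrow> majority_ball n c' i)"
  shows "cm_succeeds n (extension_queries n F)"
  unfolding cm_succeeds_def
proof (intro allI)
  fix c
  let ?cons = "cm_consistent (extension_queries n F) c"
  show "(\<forall>c'. ?cons c' \<longrightarrow> \<not> (\<exists>i. majority_ball n c' i))
        \<or> (\<exists>i\<in>{1..n}. \<forall>c'. ?cons c' \<longrightarrow> majority_ball n c' i)"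
    using decided[of c]
  proof
    assume "\<exists>A\<in>set F. \<forall>c'. ?cons c' \<longrightarrow> \<not> evenly_split c' A"
    then obtain A where "A \<in> set F" and uneven: "\<And>c'. ?cons c' \<Longrightarrow> \<not> evenly_split c' A"
      by blast
    with F have A: "A \<subseteq> {1..n}" "2 * card A < n" by auto
    have ans: "\<forall>y\<in>{1..n} - A. cm_answer c (insert y A) = cm_answer c' (insert y A)"
      "\<forall>y\<in>{1..n} - A. cm_answer c' (insert y A) = cm_answer c (insert y A)" if "?cons c'" for c'
      using cm_consistent_extension_queries[OF that \<open>A \<in> set F\<close>] by auto
    note transfer = majority_ball_transfer[OF A]
    show ?thesis
    proof (cases "\<exists>j. majority_ball n c j")
      case True
      then obtain x where x: "x \<in> {1..n} - A" "majority_ball n c x"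
        using majority_ball_outside[OF A] by blast
      have "majority_ball n c' x" if "?cons c'" for c'
        using transfer[OF uneven uneven ans(1) x] cm_consistent_refl that by blast
      then show ?thesis using x(1) by blast
    next
      case False
      have "\<not> majority_ball n c' j" if "?cons c'" for c' j
      proof
        assume "majority_ball n c' j"
        then obtain x where x: "x \<in> {1..n} - A" "majority_ball n c' x"
          using majority_ball_outside[OF A] by blast
        then show False
          using transfer[OF uneven uneven ans(2) x] cm_consistent_refl that False by blast
      qed
      then show ?thesis by blast
    qed
  qed blast
qed

lemma cm_answer_insert_evenly_split:
  assumes "finite A" "card A = 2 * h" "evenly_split c A" "y \<notin> A"
  shows "cm_answer c (insert y A) = h"
  using assms cm_answer_insert[OF assms(1,4)] evenly_split_iff_card[OF assms(1,2)]
    card_filter_add_card_filter_not[OF assms(1), of c]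
  by auto

lemma cm_succeeds_extension_queries_forced_majority:
  assumes F: "\<forall>A\<in>set F. A \<subseteq> {1..n} \<and> card A = 2 * h" and "4 * h < n" and i: "i \<in> {1..n}"
    and forced: "\<And>c. \<forall>A\<in>set F. \<forall>y\<in>{1..n} - A. cm_answer c (insert y A) = h
                     \<Longrightarrow> majority_ball n c i"
  shows "cm_succeeds n (extension_queries n F)"
proof (rule cm_succeeds_extension_queriesI)
  show "\<forall>A\<in>set F. A \<subseteq> {1..n} \<and> 2 * card A < n" using F \<open>4 * h < n\<close> by auto
next
  fix c
  let ?cons = "cm_consistent (extension_queries n F) c"
  show "(\<exists>A\<in>set F. \<forall>c'. ?cons c' \<longrightarrow> \<not> evenly_split c' A)
        \<or> (\<exists>i\<in>{1..n}. \<forall>c'. ?cons c' \<longrightarrow> majority_ball n c' i)"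
  proof (cases "\<forall>A\<in>set F. \<forall>y\<in>{1..n} - A. cm_answer c (insert y A) = h")
    case True
    then have "majority_ball n c' i" if "?cons c'" for c'
      using forced cm_consistent_extension_queries[OF that] by simp
    then show ?thesis using i by blast
  next
    case False
    then obtain A y where A: "A \<in> set F" "y \<in> {1..n} - A" "cm_answer c (insert y A) \<noteq> h"
      by blast
    with F have "finite A" "card A = 2 * h" by (auto intro: finite_subset)
    then have "\<not> evenly_split c' A" if "?cons c'" for c'
      using cm_answer_insert_evenly_split[of A h c' y] cm_consistent_extension_queries[OF that A(1,2)] A
      by auto
    then show ?thesis using A(1) by blast
  qed
qed

lemma color_class_inside_of_constant_answers:
  assumes A: "A \<subseteq> {1..n}" "card A = 2 * h" "card A < n" and uneven: "\<not> evenly_split c A"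
    and ans: "\<forall>y\<in>{1..n} - A. cm_answer c (insert y A) = h"
  obtains col where "card {j\<in>{1..n}. c j = col} = h + 1" "{j\<in>{1..n}. c j = col} \<subseteq> A"
proof -
  have fA: "finite A" using A(1) finite_subset by blast
  define a b where "a = card {j\<in>A. c j}" and "b = card {j\<in>A. \<not> c j}"
  have ab: "a + b = 2 * h" "a \<noteq> b"
    using card_filter_add_card_filter_not[OF fA, of c] A(2) uneven
    unfolding a_def b_def evenly_split_def by auto
  have eq: "min (a + of_bool (c y)) (b + of_bool (\<not> c y)) = h" if "y \<in> {1..n} - A" for y
    using ans that cm_answer_insert[OF fA, of y c] unfolding a_def b_def by auto
  have outside: "c y = (a < b)" if "y \<in> {1..n} - A" for y
    using eq[OF that] ab by (cases "c y") (auto simp: min_def split: if_splits)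
  have "card ({1..n} - A) \<noteq> 0" using A fA by (simp add: card_Diff_subset)
  then obtain y where y: "y \<in> {1..n} - A" by (metis card.empty ex_in_conv)
  define col where "col = (b < a)"
  have "c y \<noteq> col" if "y \<in> {1..n} - A" for y
    using outside[OF that] ab(2) unfolding col_def by auto
  then have "{j\<in>{1..n}. c j = col} = {j\<in>A. c j = col}"
    using A(1) by blast
  moreover have "card {j\<in>A. c j = col} = (if b < a then a else b)"
    unfolding col_def a_def b_def by (cases "b < a") auto
  moreover have "(if b < a then a else b) = h + 1"
    using eq[OF y] outside[OF y] ab by (cases "a < b") (auto simp: min_def)
  ultimately show thesis using that[of col] by auto
qed

lemma card_color_class_inter_ge:
  assumes A: "A \<subseteq> {1..n}" and ans: "\<forall>y\<in>{1..n} - A. cm_answer c (insert y A) = h"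
    and small: "card {j\<in>{1..n}. c j = col} < card ({1..n} - A)"
  shows "h \<le> card ({j\<in>{1..n}. c j = col} \<inter> A)"
proof -
  have fA: "finite A" using A finite_subset by blast
  have "\<not> {1..n} - A \<subseteq> {j\<in>{1..n}. c j = col}"
    using small card_mono[of "{j\<in>{1..n}. c j = col}" "{1..n} - A"] by auto
  then obtain y where y: "y \<in> {1..n} - A" "c y \<noteq> col" by blast
  have "min (card {j\<in>A. c j} + of_bool (c y)) (card {j\<in>A. \<not> c j} + of_bool (\<not> c y)) = h"
    using ans y cm_answer_insert[OF fA, of y c] by auto
  then have "h \<le> card {j\<in>A. c j = col}"
    using y(2) by (cases col) auto
  also have "{j\<in>A. c j = col} = {j\<in>{1..n}. c j = col} \<inter> A"
    using A by auto
  finally show ?thesis .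
qed

section \<open>Hypergraphs without Property C\<close>

lemma property_C_singleton:
  assumes "finite e"
  shows "property_C {e}"
proof -
  obtain S where S: "S \<subseteq> e" "card S = card e div 2"
    using obtain_subset_with_card_n[of "card e div 2" e] by auto
  have "{j\<in>e. j \<in> S} = S" "{j\<in>e. j \<notin> S} = e - S" using S(1) by auto
  moreover have "card (e - S) = card e - card S" using S(1) assms by (simp add: card_Diff_subset finite_subset)
  ultimately have "balanced_on (\<lambda>j. j \<in> S) e" using S(2) unfolding balanced_on_def by simp presburger
  then show ?thesis unfolding property_C_def by blast
qed

lemma two_le_card_of_not_property_C:
  assumes "finite E" "\<forall>e\<in>E. finite e" "\<not> property_C E"
  shows "2 \<le> card E"
proof (rule ccontr)
  assume "\<not> 2 \<le> card E"
  then consider "card E = 0" | "card E = 1" by linarith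
  then show False
  proof cases
    case 1
    then have "E = {}" using assms(1) by simp
    then show False using assms(3) unfolding property_C_def by simp
  next
    case 2
    then obtain e where "E = {e}" by (rule card_1_singletonE)
    then show False using assms(2,3) property_C_singleton by simp
  qed
qed

lemma not_property_C_all_but_one:
  assumes K: "finite K" "card K = 2 * q + 1" and "1 \<le> q"
  shows "\<not> property_C ((\<lambda>j. K - {j}) ` K)"
proof
  assume "property_C ((\<lambda>j. K - {j}) ` K)"
  then obtain c where bal: "\<And>j. j \<in> K \<Longrightarrow> balanced_on c (K - {j})"
    unfolding property_C_def by blast
  define t where "t = card {i\<in>K. c i}"
  have t: "t = q + of_bool (c j)" if j: "j \<in> K" for j
  proof -
    have "finite (K - {j})" "card (K - {j}) = 2 * q" using K j by auto
    then have "card {i\<in>K - {j}. c i} = q"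
      using bal[OF j] balanced_on_iff_evenly_split evenly_split_iff_card by simp
    moreover have "t = card {i \<in> insert j (K - {j}). c i}"
      unfolding t_def using j by (simp add: insert_absorb)
    ultimately show ?thesis using card_filter_insert[of "K - {j}" j c] K(1) by simp
  qed
  obtain j0 where j0: "j0 \<in> K" using K by fastforce
  have "c j = c j0" if "j \<in> K" for j
    using t[OF that] t[OF j0] by (cases "c j"; cases "c j0") simp_all
  then have "{i\<in>K. c i} = (if c j0 then K else {})" by auto
  then show False using t[OF j0] K \<open>1 \<le> q\<close> unfolding t_def by (simp split: if_splits)
qed

lemma dC_witness:
  assumes "even m" "2 \<le> m" "m < n"
  obtains E where "E \<subseteq> {e. e \<subseteq> {1..n} \<and> card e = m}" "card E = dC m n" "\<not> property_C E"
proof -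
  let ?K = "{1..m + 1}"
  have "(\<lambda>j. ?K - {j}) ` ?K \<subseteq> {e. e \<subseteq> {1..n} \<and> card e = m}" using assms(3) by auto
  moreover obtain q where "m = 2 * q" using assms(1) by (rule evenE)
  then have "\<not> property_C ((\<lambda>j. ?K - {j}) ` ?K)"
    using assms(2) by (intro not_property_C_all_but_one[of ?K q]) auto
  ultimately have "\<exists>d E. E \<subseteq> {e. e \<subseteq> {1..n} \<and> card e = m} \<and> card E = d \<and> \<not> property_C E"
    by blast
  then have "\<exists>E. E \<subseteq> {e. e \<subseteq> {1..n} \<and> card e = m} \<and> card E = dC m n \<and> \<not> property_C E"
    unfolding dC_def by (rule LeastI_ex)
  then show thesis using that by blast
qed

lemma finite_uniform_hypergraph:
  "E \<subseteq> {e. e \<subseteq> {1..n::nat} \<and> card e = m} \<Longrightarrow> finite E"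
  by (rule finite_subset[of _ "Pow {1..n}"]) auto

lemma two_le_dC:
  assumes "even m" "2 \<le> m" "m < n"
  shows "2 \<le> dC m n"
proof -
  obtain E where E: "E \<subseteq> {e. e \<subseteq> {1..n} \<and> card e = m}" "card E = dC m n" "\<not> property_C E"
    using dC_witness[OF assms] .
  have "finite E" using E(1) by (rule finite_uniform_hypergraph)
  moreover have "\<forall>e\<in>E. finite e" using E(1) by (auto intro: finite_subset)
  ultimately show ?thesis using two_le_card_of_not_property_C E(2,3) by metis
qed

section \<open>Upper bounds\<close>

lemma N_CM_even_le:
  assumes "odd m" "2 * m < n"
  shows "N_CM (Suc m) n \<le> n - m"
proof -
  have F: "\<forall>A\<in>set [{1..m}]. A \<subseteq> {1..n} \<and> card A = m" using assms by auto
  have "cm_succeeds n (extension_queries n [{1..m}])"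
    by (rule cm_succeeds_extension_queriesI) (use assms not_evenly_split_of_odd[of "{1..m}"] in auto)
  then show ?thesis using N_CM_le_length_extension_queries[OF F] by simp
qed

lemma N_CM_3_le:
  assumes "5 \<le> n"
  shows "N_CM 3 n \<le> 3 * (n - 2)"
proof -
  define F where "F = [{1, 2}, {1, 3}, {2, 3::nat}]"
  have F: "\<forall>A\<in>set F. A \<subseteq> {1..n} \<and> card A = 2 * 1" using assms unfolding F_def by auto
  have "cm_succeeds n (extension_queries n F)"
  proof (rule cm_succeeds_extension_queries_forced_majority[OF F])
    show "4 * 1 < n" "4 \<in> {1..n}" using assms by auto
    fix c assume ans: "\<forall>A\<in>set F. \<forall>y\<in>{1..n} - A. cm_answer c (insert y A) = 1"
    obtain A where A: "A \<in> set F" "\<not> evenly_split c A"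
      using evenly_split_pair[of 1 2 c] evenly_split_pair[of 1 3 c] evenly_split_pair[of 2 3 c]
      unfolding F_def by auto
    moreover have "A \<subseteq> {1..n}" "card A = 2 * 1" "card A < n" using F A(1) assms by auto
    ultimately obtain col where col: "card {j\<in>{1..n}. c j = col} = 1 + 1"
      "{j\<in>{1..n}. c j = col} \<subseteq> A"
      using color_class_inside_of_constant_answers[of A n 1 c] ans by blast
    have "4 \<notin> A" using A(1) unfolding F_def by auto
    moreover have "4 \<in> {1..n}" using assms by simp
    ultimately have "c 4 \<noteq> col" using col(2) by blast
    then have "{j\<in>{1..n}. c j = c 4} = {1..n} - {j\<in>{1..n}. c j = col}" by auto
    moreover have "card ({1..n} - {j\<in>{1..n}. c j = col}) = n - 2"
      using col(1) by (subst card_Diff_subset) auto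
    ultimately have "card {j\<in>{1..n}. c j = c 4} = n - 2" by simp
    then show "majority_ball n c 4" using assms unfolding majority_ball_def by simp
  qed
  then show ?thesis using N_CM_le_length_extension_queries[OF F] unfolding F_def by simp
qed

lemma constant_answers_impossible:
  assumes E: "E \<subseteq> {e. e \<subseteq> {1..n} \<and> card e = 2 * h}" "\<not> property_C E"
    and A0: "A0 \<in> E" and D: "A0 \<inter> D = {}" "D \<subseteq> {1..n}" "card D = 2 * h"
    and h: "2 \<le> h" "4 * h < n"
    and ans: "\<forall>A\<in>insert D E. \<forall>y\<in>{1..n} - A. cm_answer c (insert y A) = h"
  shows False
proof -
  obtain A1 where A1: "A1 \<in> E" "\<not> balanced_on c A1" using E(2) unfolding property_C_def by blast
  then have "\<not> evenly_split c A1" unfolding balanced_on_def evenly_split_def by auto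
  moreover have "A1 \<subseteq> {1..n}" "card A1 = 2 * h" "card A1 < n" using E(1) A1(1) h by auto
  moreover have "\<forall>y\<in>{1..n} - A1. cm_answer c (insert y A1) = h" using ans A1(1) by blast
  ultimately obtain col where col: "card {j\<in>{1..n}. c j = col} = h + 1"
    using color_class_inside_of_constant_answers[of A1 n h c] by blast
  define T where "T = {j\<in>{1..n}. c j = col}"
  have meets: "h \<le> card (T \<inter> A)" if "A \<in> insert D E" for A
  proof -
    have A: "A \<subseteq> {1..n}" "card A = 2 * h" using that E(1) D by auto
    then have "card ({1..n} - A) = n - 2 * h" by (simp add: card_Diff_subset finite_subset)
    then have "card T < card ({1..n} - A)" using col h unfolding T_def by simp
    moreover have "\<forall>y\<in>{1..n} - A. cm_answer c (insert y A) = h" using ans that by blast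
    ultimately show ?thesis using card_color_class_inter_ge[OF A(1)] unfolding T_def by blast
  qed
  have "card (T \<inter> A0) + card (T \<inter> D) = card (T \<inter> A0 \<union> T \<inter> D)"
    using D(1) by (intro card_Un_disjoint[symmetric]) (auto simp: T_def)
  also have "\<dots> \<le> card T" by (rule card_mono) (auto simp: T_def)
  finally show False using meets[of A0] meets[of D] A0 col h unfolding T_def by simp
qed

lemma N_CM_odd_le:
  assumes h: "2 \<le> h" "4 * h < n"
  shows "N_CM (Suc (2 * h)) n \<le> (dC (2 * h) n + 1) * (n - 2 * h)"
proof -
  obtain E where E: "E \<subseteq> {e. e \<subseteq> {1..n} \<and> card e = 2 * h}" "card E = dC (2 * h) n"
    "\<not> property_C E"
    using dC_witness[of "2 * h" n] h by auto
  obtain Es where Es: "set Es = E" "distinct Es"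
    using finite_distinct_list[OF finite_uniform_hypergraph[OF E(1)]] by blast
  obtain A0 where A0: "A0 \<in> E" using E(3) unfolding property_C_def by blast
  have "card ({1..n} - A0) = n - 2 * h"
    using A0 E(1) by (auto simp: card_Diff_subset finite_subset)
  then have "2 * h \<le> card ({1..n} - A0)" using h by simp
  then obtain D where D: "D \<subseteq> {1..n} - A0" "card D = 2 * h"
    by (rule obtain_subset_with_card_n)
  have F: "\<forall>A\<in>set (D # Es). A \<subseteq> {1..n} \<and> card A = 2 * h" using D E(1) Es(1) by auto
  \<comment> \<open>No coloring answers h to every query, so ball 1 is vacuously a forced majority ball.\<close>
  have "cm_succeeds n (extension_queries n (D # Es))"
    by (rule cm_succeeds_extension_queries_forced_majority[OF F h(2), of 1])
      (use constant_answers_impossible[OF E(1,3) A0 _ _ D(2) h] D(1) Es(1) h in auto)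
  moreover have "length (D # Es) = dC (2 * h) n + 1" using Es E(2) distinct_card by fastforce
  ultimately show ?thesis using N_CM_le_length_extension_queries[OF F] by simp
qed

theorem theorem6:
  fixes k n :: nat
  assumes "k \<ge> 2" and "2 * k - 1 \<le> n"
  shows "N_CM k n \<le> (if even k then n - k + 1 else (n - k + 1) * (1 + dC (k - 1) n))"
proof (cases "even k")
  case True
  then have "N_CM (Suc (k - 1)) n \<le> n - (k - 1)"
    using assms by (intro N_CM_even_le) auto
  then show ?thesis using True assms by simp
next
  case False
  then obtain h where k: "k = Suc (2 * h)" by (metis oddE Suc_eq_plus1)
  with assms have h: "1 \<le> h" "4 * h < n" by auto
  show ?thesis
  proof (cases "h = 1")
    case True
    with k h have k3: "k = 3" "n - k + 1 = n - 2" by auto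
    have "N_CM k n \<le> 3 * (n - 2)" using N_CM_3_le h k3 by simp
    also have "\<dots> \<le> (1 + dC 2 n) * (n - 2)" using two_le_dC[of 2 n] h by (intro mult_le_mono1) simp
    finally show ?thesis using \<open>odd k\<close> k3 by (simp add: mult.commute)
  next
    case False
    have k_eqs: "k - 1 = 2 * h" "n - k + 1 = n - 2 * h" using k h by auto
    have "N_CM k n \<le> (dC (2 * h) n + 1) * (n - 2 * h)"
      using N_CM_odd_le[OF _ h(2)] False h(1) k by simp
    then show ?thesis using \<open>odd k\<close> unfolding k_eqs by (simp add: algebra_simps)
  qed
qed

end
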